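(* Let $H$ be the system defined in the context, and suppose the underlying graph is a line (path) graph on $N\ge 2$ nodes, with edges $\{i,i+1\}$, $i=1,\dots,N-1$, having susceptances $b_{i,i+1}>0$. Let $\underline{b}$ be the arithmetic mean of these $N-1$ edge susceptances. Then $$\|H\|_2^2\le\frac{\alpha}{2}(N-1)\left(\frac{1}{k_P}+\frac{1}{\tau_Q\left(\frac{c_Q}{2\underline{b}}+k_Q\right)}\right).$$
   Context: $L_B$ is the weighted Laplacian of the graph with edge weights $b_{ik}$. Parameters: $k_P,\tau_P,k_Q,\tau_Q>0$, $\bar b\ge 0$, $c_Q=1+2k_Q\bar b$, $\alpha>0$. $H$ is the LTI system with state $\psi=(\delta,\omega,V)\in\mathbb{R}^{3N}$, input $\mathrm{w}\in\mathbb{R}^{2N}$, output $y$: $$\dot\psi=\begin{bmatrix}0 & I & 0\\ -\frac{k_P}{\tau_P}L_B & -\frac{1}{\tau_P}I & 0\\ 0 & 0 & -\frac{c_Q}{\tau_Q}I-\frac{k_Q}{\tau_Q}L_B\end{bmatrix}\psi+\begin{bmatrix}0&0\\ \frac{1}{\tau_P}I & 0\\ 0 & \frac{1}{\tau_Q}I\end{bmatrix}\mathrm{w},\qquad y=\begin{bmatrix}\sqrt{\alpha}L_B^{1/2} & 0 & 0\\ 0&0&\sqrt{\alpha}L_B^{1/2}\end{bmatrix}\psi,$$ and $\|H\|_2^2$ is the squared $\mathcal{H}_2$ norm of its transfer function (finite since the single zero mode is unobservable and all other modes are stable). *)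

theory Defs
  imports "HOL-Analysis.Analysis"
begin

fun mpow :: "real^'m^'m \<Rightarrow> nat \<Rightarrow> real^'m^'m" where
  "mpow A 0 = mat 1"
| "mpow A (Suc k) = A ** mpow A k"

definition mexp :: "real \<Rightarrow> real^'m^'m \<Rightarrow> real^'m^'m" where
  "mexp t A = (\<Sum>k. (t ^ k / fact k) *\<^sub>R mpow A k)"

text \<open>Weighted graph Laplacian of edge weights b (b i i is ignored).\<close>
definition laplacian :: "('n::finite \<Rightarrow> 'n \<Rightarrow> real) \<Rightarrow> real^'n^'n" where
  "laplacian b = (\<chi> i k. if i = k then (\<Sum>j\<in>UNIV - {i}. b i j) else - b i k)"

definition psd_sqrt :: "real^'n^'n \<Rightarrow> real^'n^'n" where
  "psd_sqrt M = (THE S. transpose S = S \<and> (\<forall>x. 0 \<le> x \<bullet> (S *v x)) \<and> S ** S = M)"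

text \<open>Squared H2 norm of the LTI system (A,B,C) (no feedthrough), in the time domain:
  integral over t \<ge> 0 of the squared Frobenius norm of the impulse response C e^{At} B.
  The value lives in ennreal, so it is \<infinity> if the integral diverges.\<close>
definition h2norm_sq :: "real^'s^'s \<Rightarrow> real^'i^'s \<Rightarrow> real^'s^'o \<Rightarrow> ennreal" where
  "h2norm_sq A B C = (\<integral>\<^sup>+ t. indicator {0..} t * ennreal ((norm (C ** mexp t A ** B))\<^sup>2) \<partial>lborel)"

text \<open>State index: Inl i = delta_i, Inr (Inl i) = omega_i, Inr (Inr i) = V_i.
  Input index: Inl i = first block of w, Inr i = second block. Output index likewise.\<close>
definition sysA :: "real \<Rightarrow> real \<Rightarrow> real \<Rightarrow> real \<Rightarrow> real \<Rightarrow> real^'n::finite^'n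
    \<Rightarrow> real^('n + 'n + 'n)^('n + 'n + 'n)" where
  "sysA kP tauP kQ tauQ cQ L = (\<chi> r c.
     (case r of
        Inl i \<Rightarrow> (case c of Inr (Inl j) \<Rightarrow> (if i = j then 1 else 0) | _ \<Rightarrow> 0)
      | Inr (Inl i) \<Rightarrow> (case c of
            Inl j \<Rightarrow> - (kP / tauP) * L $ i $ j
          | Inr (Inl j) \<Rightarrow> (if i = j then - (1 / tauP) else 0)
          | Inr (Inr j) \<Rightarrow> 0)
      | Inr (Inr i) \<Rightarrow> (case c of
            Inr (Inr j) \<Rightarrow> (if i = j then - (cQ / tauQ) else 0) - (kQ / tauQ) * L $ i $ j
          | _ \<Rightarrow> 0)))"

definition sysB :: "real \<Rightarrow> real \<Rightarrow> real^('n::finite + 'n)^('n + 'n + 'n)" where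
  "sysB tauP tauQ = (\<chi> r c.
     (case (r, c) of
        (Inr (Inl i), Inl j) \<Rightarrow> (if i = j then 1 / tauP else 0)
      | (Inr (Inr i), Inr j) \<Rightarrow> (if i = j then 1 / tauQ else 0)
      | _ \<Rightarrow> 0))"

definition sysC :: "real \<Rightarrow> real^'n::finite^'n \<Rightarrow> real^('n + 'n + 'n)^('n + 'n)" where
  "sysC alpha S = (\<chi> r c.
     (case (r, c) of
        (Inl i, Inl j) \<Rightarrow> sqrt alpha * S $ i $ j
      | (Inr i, Inr (Inr j)) \<Rightarrow> sqrt alpha * S $ i $ j
      | _ \<Rightarrow> 0))"

end

theory Submission
  imports Defs
begin

text \<open>If a symmetric \<open>P \<succeq> 0\<close> satisfies \<open>A\<^sup>T P + P A + C\<^sup>T C \<preceq> 0\<close>, then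
  \<open>x \<bullet> P x\<close> decreases at least at rate \<open>|C x|\<^sup>2\<close> along \<open>x = e\<^sup>t\<^sup>A v\<close>, hence
  \<open>\<parallel>H\<parallel>\<^sub>2\<^sup>2 \<le> tr (B\<^sup>T P B)\<close>. With \<open>\<Pi> = I - 1 1\<^sup>T / N\<close> we take \<open>P\<close> block diagonal,
  \<open>bP [kP L + \<Pi> / \<tau>P, \<Pi>; \<Pi>, \<tau>P \<Pi>]\<close> on \<open>(\<delta>, \<omega>)\<close> and \<open>bQ (pQ \<Pi> + qQ L)\<close> on \<open>V\<close>.
  On \<open>(\<delta>, \<omega>)\<close> the Lyapunov inequality is an equality and the trace term is
  \<open>\<alpha> (N - 1) / (2 kP)\<close>. On \<open>V\<close> the weights \<open>pQ, qQ\<close> are chosen so that the residual is a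
  negative multiple of \<open>(L - \<mu> \<Pi>)\<^sup>2\<close> with \<open>\<mu> = tr L / (N - 1)\<close>, and the trace term is
  \<open>\<alpha> (N - 1) / (2 \<tau>Q (cQ / \<mu> + kQ))\<close>. For a line graph \<open>tr L = 2 \<Sigma> b\<^sub>i\<^sub>,\<^sub>i\<^sub>+\<^sub>1\<close>,
  so \<open>\<mu>\<close> is twice the mean susceptance. The output matrix involves \<open>L\<^sup>1\<^sup>/\<^sup>2\<close>, which is
  pinned down by the spectral theorem for symmetric matrices.\<close>

section \<open>Spectral theorem and positive semidefinite square roots\<close>

lemma linear_coeff_eq_0_if_quadratic_nonneg:
  fixes a c :: real
  assumes nonneg: "\<And>t. 0 \<le> a * t + c * t\<^sup>2"
  shows "a = 0"
proof (rule ccontr)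
  assume "a \<noteq> 0"
  define t where "t = - a / (\<bar>c\<bar> + 1)"
  have d: "\<bar>c\<bar> + 1 > 0" by simp
  have "t\<^sup>2 > 0" using \<open>a \<noteq> 0\<close> by (simp add: t_def)
  have "c * t\<^sup>2 \<le> \<bar>c\<bar> * t\<^sup>2" by (simp add: mult_right_mono)
  also have "\<dots> < (\<bar>c\<bar> + 1) * t\<^sup>2" using \<open>t\<^sup>2 > 0\<close> by simp
  also have "\<dots> = - a * t" using d unfolding t_def power2_eq_square by (simp add: divide_simps del: abs_mult_self_eq)
  finally show False using nonneg[of t] by linarith
qed

lemma symmetric_matrix_inner:
  fixes A :: "real^'n^'n"
  assumes "transpose A = A"
  shows "u \<bullet> (A *v w) = (A *v u) \<bullet> w"
  by (metis assms dot_lmul_matrix inner_commute transpose_matrix_vector)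

text \<open>A maximiser \<open>u\<close> of the Rayleigh quotient on the unit sphere of \<open>V\<close> is an eigenvector:
  otherwise moving from \<open>u\<close> towards \<open>l u - A u\<close> would increase the quotient.\<close>
lemma symmetric_matrix_eigenvector_in_invariant_subspace:
  fixes A :: "real^'n^'n"
  assumes sym: "transpose A = A" and V: "subspace V" "V \<noteq> {0}"
    and inv: "\<And>x. x \<in> V \<Longrightarrow> A *v x \<in> V"
  obtains u where "u \<in> V" "norm u = 1" "A *v u = (u \<bullet> (A *v u)) *\<^sub>R u"
proof -
  let ?S = "V \<inter> sphere 0 1"
  obtain x where x: "x \<in> V" "x \<noteq> 0" using V subspace_0 by blast
  then have "(1 / norm x) *\<^sub>R x \<in> ?S" using V by (simp add: subspace_scale)
  moreover have "compact ?S" by (intro closed_Int_compact closed_subspace V compact_sphere)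
  moreover have "continuous_on ?S (\<lambda>z. z \<bullet> (A *v z))"
    by (intro continuous_intros linear_continuous_on matrix_vector_mul_bounded_linear)
  ultimately obtain u where u: "u \<in> V" "norm u = 1"
    and umax: "\<And>y. y \<in> ?S \<Longrightarrow> y \<bullet> (A *v y) \<le> u \<bullet> (A *v u)"
    using continuous_attains_sup[of ?S] by (metis (no_types, lifting) IntD1 IntD2 empty_iff mem_sphere_0)
  define l where "l = u \<bullet> (A *v u)"
  have rayleigh: "z \<bullet> (A *v z) \<le> l * (norm z)\<^sup>2" if "z \<in> V" for z
  proof (cases "z = 0")
    case False
    then have "(1 / norm z) *\<^sub>R z \<in> ?S" using that V by (simp add: subspace_scale)
    then have "(1 / norm z)\<^sup>2 * (z \<bullet> (A *v z)) \<le> l"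
      using umax unfolding l_def by (fastforce simp: matrix_vector_mult_scaleR power2_eq_square)
    then show ?thesis using False by (simp add: field_simps)
  qed simp
  define w where "w = l *\<^sub>R u - A *v u"
  have w: "w \<in> V" unfolding w_def using u inv V by (simp add: subspace_diff subspace_scale)
  have uu: "u \<bullet> u = 1" using u by (simp add: dot_square_norm)
  have wAu: "w \<bullet> (A *v u) = l * (u \<bullet> w) - w \<bullet> w"
    unfolding w_def by (simp add: inner_diff_left l_def inner_commute)
  have "0 \<le> 2 * (w \<bullet> w) * t + (l * (w \<bullet> w) - w \<bullet> (A *v w)) * t\<^sup>2" for t
  proof -
    have "u + t *\<^sub>R w \<in> V" using u w V by (simp add: subspace_add subspace_scale)
    from rayleigh[OF this] show ?thesis
      using symmetric_matrix_inner[OF sym, of u w] uu wAu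
      unfolding power2_norm_eq_inner
      by (simp add: matrix_vector_right_distrib matrix_vector_mult_scaleR
          inner_add_left inner_add_right l_def inner_commute power2_eq_square algebra_simps)
  qed
  then have "w = 0" using linear_coeff_eq_0_if_quadratic_nonneg by fastforce
  then show ?thesis using that u unfolding w_def l_def by simp
qed

lemma inner_orthonormal_sum:
  fixes B :: "'a::real_inner set"
  assumes "finite B" "pairwise orthogonal B" "\<And>u. u \<in> B \<Longrightarrow> norm u = 1" "w \<in> B"
  shows "w \<bullet> (\<Sum>u\<in>B. c u *\<^sub>R u) = c w"
proof -
  have "w \<bullet> (\<Sum>u\<in>B. c u *\<^sub>R u) = c w * (w \<bullet> w) + (\<Sum>u\<in>B - {w}. c u * (w \<bullet> u))"
    using assms by (simp add: sum.remove inner_add_right inner_sum_right)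
  also have "(\<Sum>u\<in>B - {w}. c u * (w \<bullet> u)) = 0"
    using assms(2,4) by (intro sum.neutral) (auto simp: pairwise_def orthogonal_def)
  finally show ?thesis using assms(3)[OF assms(4)] by (simp add: dot_square_norm)
qed

lemma symmetric_matrix_eigenvector_complement:
  fixes A :: "real^'n^'n"
  assumes sym: "transpose A = A" and V: "subspace V" and inv: "\<And>x. x \<in> V \<Longrightarrow> A *v x \<in> V"
    and u: "u \<in> V" "u \<bullet> u = 1" "A *v u = c *\<^sub>R u"
  defines "V' \<equiv> {x \<in> V. u \<bullet> x = 0}"
  shows "subspace V'" and "\<And>x. x \<in> V' \<Longrightarrow> A *v x \<in> V'" and "dim V' < dim V"
    and "\<And>x. x \<in> V \<Longrightarrow> x - (u \<bullet> x) *\<^sub>R u \<in> V'"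
proof -
  show V': "subspace V'" using V unfolding V'_def subspace_def by (auto simp: inner_add_right)
  show "A *v x \<in> V'" if "x \<in> V'" for x
    using that inv symmetric_matrix_inner[OF sym, of u x] u(3) unfolding V'_def by simp
  have "u \<notin> V'" using u(2) unfolding V'_def by auto
  then have "V' \<subset> V" using u(1) unfolding V'_def by blast
  then show "dim V' < dim V" using V' V by (metis dim_subset order_less_le subspace_dim_equal)
  show "x - (u \<bullet> x) *\<^sub>R u \<in> V'" if "x \<in> V" for x
    using that u V unfolding V'_def by (auto simp: subspace_diff subspace_scale inner_diff_right)
qed

lemma symmetric_matrix_eigenbasis_of_invariant_subspace:
  fixes A :: "real^'n^'n"
  assumes sym: "transpose A = A"
  shows "subspace V \<Longrightarrow> (\<And>x. x \<in> V \<Longrightarrow> A *v x \<in> V) \<Longrightarrow>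
    \<exists>B \<subseteq> V. finite B \<and> pairwise orthogonal B \<and>
       (\<forall>u\<in>B. norm u = 1 \<and> A *v u = (u \<bullet> (A *v u)) *\<^sub>R u) \<and>
       (\<forall>x\<in>V. x = (\<Sum>u\<in>B. (u \<bullet> x) *\<^sub>R u))"
proof (induction "dim V" arbitrary: V rule: less_induct)
  case less
  show ?case
  proof (cases "V = {0}")
    case True
    then show ?thesis by (intro exI[of _ "{}"]) auto
  next
    case False
    obtain u where u: "u \<in> V" "norm u = 1" "A *v u = (u \<bullet> (A *v u)) *\<^sub>R u"
      using symmetric_matrix_eigenvector_in_invariant_subspace[OF sym less.prems(1) False less.prems(2)] .
    have uu: "u \<bullet> u = 1" using u by (simp add: dot_square_norm)
    define V' where "V' = {x \<in> V. u \<bullet> x = 0}"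
    have V': "subspace V'" "\<And>x. x \<in> V' \<Longrightarrow> A *v x \<in> V'" "dim V' < dim V"
      "\<And>x. x \<in> V \<Longrightarrow> x - (u \<bullet> x) *\<^sub>R u \<in> V'"
      using symmetric_matrix_eigenvector_complement[OF sym less.prems(1) _ u(1) uu u(3)] less.prems(2)
      unfolding V'_def by blast+
    obtain B' where B': "B' \<subseteq> V'" "finite B'" "pairwise orthogonal B'"
      "\<forall>w\<in>B'. norm w = 1 \<and> A *v w = (w \<bullet> (A *v w)) *\<^sub>R w"
      "\<forall>x\<in>V'. x = (\<Sum>w\<in>B'. (w \<bullet> x) *\<^sub>R w)"
      using less.hyps[OF V'(3) V'(1) V'(2)] by blast
    have u_orth: "u \<bullet> w = 0" if "w \<in> B'" for w using B'(1) that V'_def by auto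
    have u_notin: "u \<notin> B'" using u_orth uu by auto
    have expand: "x = (\<Sum>w\<in>insert u B'. (w \<bullet> x) *\<^sub>R w)" if x: "x \<in> V" for x
    proof -
      have "x - (u \<bullet> x) *\<^sub>R u = (\<Sum>w\<in>B'. (w \<bullet> (x - (u \<bullet> x) *\<^sub>R u)) *\<^sub>R w)"
        using B'(5) V'(4)[OF x] by blast
      also have "\<dots> = (\<Sum>w\<in>B'. (w \<bullet> x) *\<^sub>R w)"
        using u_orth by (intro sum.cong) (auto simp: inner_diff_right inner_commute)
      finally show ?thesis using B'(2) u_notin by (simp add: algebra_simps)
    qed
    show ?thesis
    proof (intro exI[of _ "insert u B'"] conjI)
      show "pairwise orthogonal (insert u B')"
        using B'(3) u_orth by (intro pairwise_orthogonal_insert) (auto simp: orthogonal_def)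
    qed (use u B' expand V'_def in auto)
  qed
qed

lemma symmetric_matrix_orthonormal_eigenbasis:
  fixes A :: "real^'n^'n"
  assumes "transpose A = A"
  obtains B where "finite B" "pairwise orthogonal B" "\<And>u. u \<in> B \<Longrightarrow> norm u = 1"
    "\<And>u. u \<in> B \<Longrightarrow> A *v u = (u \<bullet> (A *v u)) *\<^sub>R u" "\<And>x. x = (\<Sum>u\<in>B. (u \<bullet> x) *\<^sub>R u)"
  using symmetric_matrix_eigenbasis_of_invariant_subspace[OF assms, of UNIV] by auto

lemma symmetric_matrix_mult_eigenbasis:
  fixes A :: "real^'n^'n"
  assumes "\<And>u. u \<in> B \<Longrightarrow> A *v u = (u \<bullet> (A *v u)) *\<^sub>R u" "x = (\<Sum>u\<in>B. (u \<bullet> x) *\<^sub>R u)"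
  shows "A *v x = (\<Sum>u\<in>B. ((u \<bullet> (A *v u)) * (u \<bullet> x)) *\<^sub>R u)"
proof -
  have "A *v x = (\<Sum>u\<in>B. (u \<bullet> x) *\<^sub>R (A *v u))"
    by (subst assms(2)) (simp add: linear_sum[OF matrix_vector_mul_linear] matrix_vector_mult_scaleR)
  also have "\<dots> = (\<Sum>u\<in>B. ((u \<bullet> (A *v u)) * (u \<bullet> x)) *\<^sub>R u)"
    by (intro sum.cong refl) (metis assms(1) mult.commute scaleR_scaleR)
  finally show ?thesis .
qed

definition psd_matrix :: "real^'n^'n \<Rightarrow> bool" where
  "psd_matrix A \<longleftrightarrow> transpose A = A \<and> (\<forall>x. 0 \<le> x \<bullet> (A *v x))"

lemma psd_matrix_sqrt_exists:
  fixes A :: "real^'n^'n"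
  assumes "psd_matrix A"
  shows "\<exists>S. psd_matrix S \<and> S ** S = A"
proof -
  have sym: "transpose A = A" using assms unfolding psd_matrix_def by blast
  obtain B where B: "finite B" "pairwise orthogonal B" "\<And>u. u \<in> B \<Longrightarrow> norm u = 1"
    "\<And>u. u \<in> B \<Longrightarrow> A *v u = (u \<bullet> (A *v u)) *\<^sub>R u" "\<And>x. x = (\<Sum>u\<in>B. (u \<bullet> x) *\<^sub>R u)"
    using symmetric_matrix_orthonormal_eigenbasis[OF sym] by blast
  define l where "l u = u \<bullet> (A *v u)" for u
  have l: "0 \<le> l u" for u using assms unfolding psd_matrix_def l_def by blast
  define S :: "real^'n^'n" where "S = (\<chi> i j. \<Sum>u\<in>B. sqrt (l u) * (u$i * u$j))"
  have S: "S *v x = (\<Sum>u\<in>B. (sqrt (l u) * (u \<bullet> x)) *\<^sub>R u)" for x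
  proof -
    have "(S *v x) $ i = (\<Sum>u\<in>B. \<Sum>j\<in>UNIV. sqrt (l u) * u$i * (u$j * x$j))" for i
      unfolding S_def matrix_vector_mult_def
      by (subst sum.swap) (simp add: sum_distrib_right mult.assoc)
    then show ?thesis by (simp add: vec_eq_iff inner_vec_def sum_distrib_left mult_ac)
  qed
  have "transpose S = S" by (simp add: S_def transpose_def vec_eq_iff mult.commute)
  moreover have "\<forall>x. 0 \<le> x \<bullet> (S *v x)"
    using l by (auto simp: S inner_sum_right inner_commute mult.assoc intro!: sum_nonneg)
  moreover have "S ** S = A"
  proof (rule matrix_eq[THEN iffD2], rule allI)
    fix x
    have "(S ** S) *v x = (\<Sum>u\<in>B. (sqrt (l u) * (u \<bullet> (S *v x))) *\<^sub>R u)"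
      by (simp only: S[of "S *v x"] flip: matrix_vector_mul_assoc)
    also have "\<dots> = (\<Sum>u\<in>B. (l u * (u \<bullet> x)) *\<^sub>R u)"
      using l by (intro sum.cong refl) (simp add: S inner_orthonormal_sum[OF B(1-3)] flip: mult.assoc)
    also have "\<dots> = A *v x"
      unfolding l_def by (rule symmetric_matrix_mult_eigenbasis[OF B(4,5), symmetric])
    finally show "(S ** S) *v x = A *v x" .
  qed
  ultimately show ?thesis unfolding psd_matrix_def by blast
qed

lemma psd_matrix_sqrt_unique:
  fixes S T :: "real^'n^'n"
  assumes S: "psd_matrix S" and T: "psd_matrix T" and sq: "S ** S = T ** T"
  shows "S = T"
proof -
  have sym: "transpose (S - T) = S - T"
    using S T unfolding psd_matrix_def by (simp add: transpose_def vec_eq_iff)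
  obtain B where B: "finite B" "pairwise orthogonal B" "\<And>u. u \<in> B \<Longrightarrow> norm u = 1"
    "\<And>u. u \<in> B \<Longrightarrow> (S - T) *v u = (u \<bullet> ((S - T) *v u)) *\<^sub>R u"
    "\<And>x. x = (\<Sum>u\<in>B. (u \<bullet> x) *\<^sub>R u)"
    using symmetric_matrix_orthonormal_eigenbasis[OF sym] by blast
  have eigenvalue_0: "u \<bullet> ((S - T) *v u) = 0" if u: "u \<in> B" for u
  proof -
    define m where "m = u \<bullet> ((S - T) *v u)"
    have uu: "u \<bullet> u = 1" using B(3)[OF u] by (simp add: dot_square_norm)
    have Su: "S *v u = T *v u + m *\<^sub>R u"
      using B(4)[OF u] unfolding m_def by (simp add: matrix_vector_mult_diff_rdistrib algebra_simps)
    have "(S *v u) \<bullet> (S *v u) = u \<bullet> ((S ** S) *v u)"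
      using S symmetric_matrix_inner[of S u "S *v u"]
      unfolding psd_matrix_def by (simp add: matrix_vector_mul_assoc)
    also have "\<dots> = (T *v u) \<bullet> (T *v u)"
      using T symmetric_matrix_inner[of T u "T *v u"]
      unfolding sq psd_matrix_def by (simp add: matrix_vector_mul_assoc)
    finally have "(S *v u) \<bullet> (S *v u) = (T *v u) \<bullet> (T *v u)" .
    then have "m * (2 * (u \<bullet> (T *v u)) + m) = 0"
      unfolding Su using uu
      by (simp add: inner_add_left inner_add_right inner_commute power2_eq_square algebra_simps)
    moreover have "0 \<le> u \<bullet> (T *v u)" using T unfolding psd_matrix_def by blast
    moreover have "u \<bullet> (S *v u) = u \<bullet> (T *v u) + m" using uu by (simp add: Su inner_add_right)
    then have "0 \<le> u \<bullet> (T *v u) + m" using S unfolding psd_matrix_def by metis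
    ultimately show ?thesis unfolding m_def[symmetric] by (auto simp: mult_eq_0_iff)
  qed
  have "(S - T) *v x = 0" for x
    by (subst symmetric_matrix_mult_eigenbasis[OF B(4,5)]) (auto intro: sum.neutral simp: eigenvalue_0)
  then have "S - T = 0" by (simp add: matrix_eq)
  then show ?thesis by simp
qed

lemma psd_sqrt:
  fixes A :: "real^'n^'n"
  assumes "psd_matrix A"
  shows "psd_matrix (psd_sqrt A)" "psd_sqrt A ** psd_sqrt A = A"
proof -
  have "\<exists>!S. psd_matrix S \<and> S ** S = A"
    using psd_matrix_sqrt_exists[OF assms] psd_matrix_sqrt_unique by blast
  from theI'[OF this] show "psd_matrix (psd_sqrt A)" "psd_sqrt A ** psd_sqrt A = A"
    unfolding psd_sqrt_def psd_matrix_def by auto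
qed

lemma norm_psd_sqrt_mult_squared:
  fixes A :: "real^'n^'n"
  assumes "psd_matrix A"
  shows "(norm (psd_sqrt A *v x))\<^sup>2 = x \<bullet> (A *v x)"
  using psd_sqrt[OF assms] symmetric_matrix_inner[of "psd_sqrt A" x "psd_sqrt A *v x"]
  unfolding psd_matrix_def power2_norm_eq_inner by (simp add: matrix_vector_mul_assoc)

section \<open>The matrix exponential\<close>

lemma onorm_mpow_le:
  fixes A :: "real^'n^'n"
  shows "onorm ((*v) (mpow A k)) \<le> onorm ((*v) A) ^ k"
proof (induction k)
  case 0
  have "onorm (\<lambda>x::real^'n. x) \<le> 1" by (rule onorm_le) simp
  then show ?case by simp
next
  case (Suc k)
  have "(*v) (mpow A (Suc k)) = (*v) A \<circ> (*v) (mpow A k)"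
    by (auto simp: matrix_vector_mul_assoc)
  then have "onorm ((*v) (mpow A (Suc k))) \<le> onorm ((*v) A) * onorm ((*v) (mpow A k))"
    by (simp add: onorm_compose matrix_vector_mul_bounded_linear)
  also have "\<dots> \<le> onorm ((*v) A) ^ Suc k"
    using Suc.IH by (simp add: mult_left_mono onorm_pos_le matrix_vector_mul_bounded_linear)
  finally show ?case .
qed

lemma norm_matrix_le_onorm:
  fixes M :: "real^'n^'m"
  shows "norm M \<le> real CARD('m) * real CARD('n) * onorm ((*v) M)"
proof -
  have "norm M \<le> (\<Sum>i\<in>UNIV. norm (M $ i))"
    unfolding norm_vec_def by (rule L2_set_le_sum) simp
  also have "\<dots> \<le> (\<Sum>i\<in>(UNIV::'m set). \<Sum>j\<in>(UNIV::'n set). \<bar>M $ i $ j\<bar>)"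
    by (intro sum_mono norm_le_l1_cart)
  also have "\<dots> \<le> (\<Sum>i\<in>(UNIV::'m set). \<Sum>j\<in>(UNIV::'n set). onorm ((*v) M))"
    by (intro sum_mono matrix_component_le_onorm)
  finally show ?thesis by simp
qed

lemma summable_mexp_series:
  fixes A :: "real^'n^'n"
  shows "summable (\<lambda>k. (t ^ k / fact k) *\<^sub>R mpow A k)"
proof (rule summable_comparison_test'[where N = 0])
  define K where "K = onorm ((*v) A)"
  define C where "C = real CARD('n) * real CARD('n)"
  show "summable (\<lambda>k. C * (inverse (fact k) * (\<bar>t\<bar> * K) ^ k))"
    by (intro summable_mult summable_exp)
  have "norm (mpow A k) \<le> C * K ^ k" for k
  proof -
    have "norm (mpow A k) \<le> C * onorm ((*v) (mpow A k))"
      using norm_matrix_le_onorm[of "mpow A k"] unfolding C_def by simp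
    also have "\<dots> \<le> C * K ^ k"
      unfolding C_def K_def by (intro mult_left_mono onorm_mpow_le) simp
    finally show ?thesis .
  qed
  then show "norm ((t ^ k / fact k) *\<^sub>R mpow A k) \<le> C * (inverse (fact k) * (\<bar>t\<bar> * K) ^ k)" for k
  proof -
    have "norm ((t ^ k / fact k) *\<^sub>R mpow A k) = (\<bar>t\<bar> ^ k / fact k) * norm (mpow A k)"
      by (simp add: power_abs)
    also have "\<dots> \<le> (\<bar>t\<bar> ^ k / fact k) * (C * K ^ k)"
      using \<open>norm (mpow A k) \<le> C * K ^ k\<close> by (intro mult_left_mono) simp_all
    also have "\<dots> = C * (inverse (fact k) * (\<bar>t\<bar> * K) ^ k)"
      by (simp add: power_mult_distrib field_simps)
    finally show ?thesis .
  qed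
qed

lemma bounded_linear_matrix_vector_mult_left: "bounded_linear (\<lambda>M::real^'n^'m. M *v v)"
  by (auto intro!: linear_conv_bounded_linear[THEN iffD1] linearI
      simp: matrix_vector_mult_add_rdistrib scaleR_matrix_vector_assoc)

lemma mexp_mult_vector_sums:
  fixes A :: "real^'n^'n"
  shows "(\<lambda>k. (t ^ k / fact k) *\<^sub>R (mpow A k *v v)) sums (mexp t A *v v)"
  using bounded_linear.sums[OF bounded_linear_matrix_vector_mult_left summable_sums[OF summable_mexp_series]]
  unfolding mexp_def by (simp add: scaleR_matrix_vector_assoc)

lemma mexp_0 [simp]: "mexp 0 A = (mat 1 :: real^'n^'n)"
proof -
  have "(\<lambda>k. ((0::real) ^ k / fact k) *\<^sub>R mpow A k) = (\<lambda>k. if k = 0 then mat 1 else 0)"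
    by auto
  moreover have "(\<lambda>k. if k = 0 then mat 1 else 0) sums (mat 1 :: real^'n^'n)"
    using sums_single[of 0 "\<lambda>_. mat 1 :: real^'n^'n"] by simp
  ultimately show ?thesis unfolding mexp_def by (simp add: sums_iff)
qed

lemma has_vector_derivative_mexp_mult_vector:
  fixes A :: "real^'n^'n"
  shows "((\<lambda>t. mexp t A *v v) has_vector_derivative (A *v (mexp t A *v v))) (at t)"
proof -
  have deriv_nth: "((\<lambda>s. (mexp s A *v v) $ i) has_real_derivative (A *v (mexp t A *v v)) $ i) (at t)"
    for i
  proof -
    define c where "c k = (mpow A k *v v) $ i / fact k" for k
    have c_sums: "(\<lambda>k. c k * s ^ k) sums ((mexp s A *v v) $ i)" for s
      using bounded_linear.sums[OF bounded_linear_vec_nth[of i] mexp_mult_vector_sums[of s A v]]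
      by (simp add: c_def mult.commute)
    have "(\<lambda>k. (t ^ k / fact k) *\<^sub>R (mpow A (Suc k) *v v)) sums (A *v (mexp t A *v v))"
      using bounded_linear.sums[OF matrix_vector_mul_bounded_linear mexp_mult_vector_sums]
      by (simp add: matrix_vector_mult_scaleR matrix_vector_mul_assoc)
    from bounded_linear.sums[OF bounded_linear_vec_nth[of i] this]
    have "(\<lambda>k. ((t ^ k / fact k) *\<^sub>R (mpow A (Suc k) *v v)) $ i) sums ((A *v (mexp t A *v v)) $ i)" .
    moreover have "((t ^ k / fact k) *\<^sub>R (mpow A (Suc k) *v v)) $ i = diffs c k * t ^ k" for k
      by (simp add: diffs_def c_def fact_Suc del: of_nat_Suc mpow.simps)
    ultimately have "(\<lambda>k. diffs c k * t ^ k) sums ((A *v (mexp t A *v v)) $ i)" by simp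
    with c_sums show ?thesis
      using termdiffs_strong_converges_everywhere[of c t] by (simp add: sums_iff)
  qed
  have "((\<lambda>t. mexp t A *v v) has_derivative (\<lambda>h. h *\<^sub>R (A *v (mexp t A *v v)))) (at t)"
  proof (subst has_derivative_componentwise_within, intro ballI)
    fix b :: "real^'n" assume "b \<in> Basis"
    then obtain j where b: "b = axis j 1" by (auto simp: Basis_vec_def)
    show "((\<lambda>s. (mexp s A *v v) \<bullet> b) has_derivative (\<lambda>h. h *\<^sub>R (A *v (mexp t A *v v)) \<bullet> b)) (at t)"
      using deriv_nth[of j] unfolding b has_field_derivative_def by (simp add: inner_axis mult_commute_abs)
  qed
  then show ?thesis unfolding has_vector_derivative_def .
qed

lemma continuous_on_mexp_mult_vector: "continuous_on S (\<lambda>t. mexp t (A::real^'n^'n) *v v)"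
  by (rule continuous_at_imp_continuous_on)
    (use has_vector_derivative_continuous[OF has_vector_derivative_mexp_mult_vector] in blast)

section \<open>A Lyapunov bound for the \<open>H\<^sub>2\<close> norm\<close>

lemma output_energy_le_lyapunov:
  fixes A :: "real^'s^'s" and C :: "real^'s^'o" and f :: "real^'s \<Rightarrow> real^'s"
  assumes lin: "linear f" and sym: "\<And>u w. u \<bullet> f w = w \<bullet> f u" and pos: "\<And>z. 0 \<le> z \<bullet> f z"
    and lyap: "\<And>z. 2 * ((A *v z) \<bullet> f z) + (norm (C *v z))\<^sup>2 \<le> 0"
    and T: "0 \<le> T"
  shows "(\<lambda>t. (norm (C *v (mexp t A *v v)))\<^sup>2) integrable_on {0..T}"
    and "integral {0..T} (\<lambda>t. (norm (C *v (mexp t A *v v)))\<^sup>2) \<le> v \<bullet> f v"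
proof -
  define x where "x t = mexp t A *v v" for t
  define V where "V t = x t \<bullet> f (x t)" for t
  have dx: "(x has_derivative (\<lambda>h. h *\<^sub>R (A *v x t))) (at t)" for t
    using has_vector_derivative_mexp_mult_vector unfolding x_def has_vector_derivative_def .
  have "(V has_derivative (\<lambda>h. x t \<bullet> f (h *\<^sub>R (A *v x t)) + (h *\<^sub>R (A *v x t)) \<bullet> f (x t))) (at t)"
    for t
    unfolding V_def using lin
    by (intro has_derivative_inner dx bounded_linear.has_derivative[OF _ dx])
      (simp add: linear_conv_bounded_linear)
  moreover have "x t \<bullet> f (h *\<^sub>R (A *v x t)) = h * ((A *v x t) \<bullet> f (x t))" for t h
    using sym[of "x t" "h *\<^sub>R (A *v x t)"] by simp
  ultimately have dV: "(V has_vector_derivative (2 * ((A *v x t) \<bullet> f (x t)))) (at t)" for t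
    unfolding has_vector_derivative_def by (simp add: algebra_simps)
  have "((\<lambda>t. 2 * ((A *v x t) \<bullet> f (x t))) has_integral (V T - V 0)) {0..T}"
    by (rule fundamental_theorem_of_calculus[OF T]) (use dV has_vector_derivative_at_within in blast)
  from has_integral_neg[OF this]
  have ftc: "((\<lambda>t. - (2 * ((A *v x t) \<bullet> f (x t)))) has_integral (V 0 - V T)) {0..T}"
    by simp
  have "continuous_on {0..T} (\<lambda>t. (norm (C *v x t))\<^sup>2)"
    unfolding x_def
    by (intro continuous_intros continuous_on_compose2[OF _ continuous_on_mexp_mult_vector]
        linear_continuous_on matrix_vector_mul_bounded_linear) auto
  then show energy: "(\<lambda>t. (norm (C *v (mexp t A *v v)))\<^sup>2) integrable_on {0..T}"
    unfolding x_def by (rule integrable_continuous_interval)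
  have "integral {0..T} (\<lambda>t. (norm (C *v x t))\<^sup>2)
      \<le> integral {0..T} (\<lambda>t. - (2 * ((A *v x t) \<bullet> f (x t))))"
  proof (rule integral_le)
    show "(\<lambda>t. (norm (C *v x t))\<^sup>2) integrable_on {0..T}" using energy unfolding x_def .
    show "(\<lambda>t. - (2 * ((A *v x t) \<bullet> f (x t)))) integrable_on {0..T}"
      using ftc by (rule has_integral_integrable)
    show "(norm (C *v x t))\<^sup>2 \<le> - (2 * ((A *v x t) \<bullet> f (x t)))" for t
      using lyap[of "x t"] by simp
  qed
  also have "\<dots> = V 0 - V T" using ftc by (rule integral_unique)
  also have "\<dots> \<le> v \<bullet> f v" using pos by (simp add: V_def x_def)
  finally show "integral {0..T} (\<lambda>t. (norm (C *v (mexp t A *v v)))\<^sup>2) \<le> v \<bullet> f v"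
    unfolding x_def .
qed

lemma nn_integral_halfline_le:
  fixes g :: "real \<Rightarrow> real"
  assumes cont: "continuous_on UNIV g" and nonneg: "\<And>t. 0 \<le> g t"
    and bound: "\<And>T. 0 \<le> T \<Longrightarrow> integral {0..T} g \<le> c"
  shows "(\<integral>\<^sup>+ t. indicator {0..} t * ennreal (g t) \<partial>lborel) \<le> ennreal c"
proof -
  have [measurable]: "g \<in> borel_measurable lborel"
    using borel_measurable_continuous_onI[OF cont] by simp
  have truncated: "(\<integral>\<^sup>+ t. indicator {0..real n} t * ennreal (g t) \<partial>lborel) \<le> ennreal c" for n
  proof -
    have "(g has_integral integral {0..real n} g) {0..real n}"
      using integrable_continuous_interval[OF continuous_on_subset[OF cont]] by blast
    from nn_integral_has_integral_lebesgue[OF _ this]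
    have "(\<integral>\<^sup>+ t. indicator {0..real n} t * ennreal (g t) \<partial>lborel) = ennreal (integral {0..real n} g)"
      using nonneg by (simp add: indicator_mult_ennreal)
    also have "\<dots> \<le> ennreal c" using bound by (simp add: ennreal_leI)
    finally show ?thesis .
  qed
  have "indicator {0..} t * ennreal (g t) = (SUP n. indicator {0..real n} t * ennreal (g t))" for t
  proof (cases "0 \<le> t")
    case True
    obtain m where "t \<le> real m" using real_arch_simple by blast
    with True show ?thesis
      by (intro antisym SUP_upper2[of m] SUP_least) (auto simp: indicator_def)
  qed simp
  then have "(\<integral>\<^sup>+ t. indicator {0..} t * ennreal (g t) \<partial>lborel)
      = (SUP n. \<integral>\<^sup>+ t. indicator {0..real n} t * ennreal (g t) \<partial>lborel)"
    by (simp add: nn_integral_monotone_convergence_SUP incseq_def le_fun_def indicator_def)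
  also have "\<dots> \<le> ennreal c" by (intro SUP_least truncated)
  finally show ?thesis .
qed

lemma norm_vec_squared: "(norm x)\<^sup>2 = (\<Sum>i\<in>UNIV. (x $ i)\<^sup>2)" for x :: "real^'n"
  unfolding power2_norm_eq_inner by (simp add: inner_vec_def power2_eq_square)

lemma norm_matrix_squared_eq_sum_columns:
  fixes M :: "real^'i^'o"
  shows "(norm M)\<^sup>2 = (\<Sum>c\<in>UNIV. (norm (M *v axis c 1))\<^sup>2)"
proof -
  have "(norm M)\<^sup>2 = (\<Sum>r\<in>UNIV. \<Sum>c\<in>UNIV. (M $ r $ c)\<^sup>2)"
    unfolding power2_norm_eq_inner by (simp add: inner_vec_def power2_eq_square)
  also have "\<dots> = (\<Sum>c\<in>UNIV. (norm (M *v axis c 1))\<^sup>2)"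
    by (subst sum.swap) (simp add: norm_vec_squared matrix_vector_mult_basis column_def)
  finally show ?thesis .
qed

text \<open>The matrix \<open>P \<succeq> 0\<close> with \<open>A\<^sup>T P + P A + C\<^sup>T C \<preceq> 0\<close> is given as the linear map \<open>f\<close>;
  the right-hand side is \<open>tr (B\<^sup>T P B)\<close>.\<close>
lemma h2norm_sq_le_lyapunov:
  fixes A :: "real^'s^'s" and B :: "real^'i^'s" and C :: "real^'s^'o" and f :: "real^'s \<Rightarrow> real^'s"
  assumes lin: "linear f" and sym: "\<And>u w. u \<bullet> f w = w \<bullet> f u" and pos: "\<And>z. 0 \<le> z \<bullet> f z"
    and lyap: "\<And>z. 2 * ((A *v z) \<bullet> f z) + (norm (C *v z))\<^sup>2 \<le> 0"
  shows "h2norm_sq A B C \<le> ennreal (\<Sum>c\<in>UNIV. (B *v axis c 1) \<bullet> f (B *v axis c 1))"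
proof -
  define y where "y c t = (norm (C *v (mexp t A *v (B *v axis c 1))))\<^sup>2" for c t
  have g: "(norm (C ** mexp t A ** B))\<^sup>2 = (\<Sum>c\<in>UNIV. y c t)" for t
    unfolding norm_matrix_squared_eq_sum_columns y_def
    by (simp add: matrix_vector_mul_assoc matrix_mul_assoc)
  have "continuous_on UNIV (\<lambda>t. \<Sum>c\<in>UNIV. y c t)"
    unfolding y_def
    by (intro continuous_intros continuous_on_compose2[OF _ continuous_on_mexp_mult_vector]
        linear_continuous_on matrix_vector_mul_bounded_linear) auto
  moreover have "integral {0..T} (\<lambda>t. \<Sum>c\<in>UNIV. y c t) \<le> (\<Sum>c\<in>UNIV. (B *v axis c 1) \<bullet> f (B *v axis c 1))"
    if "0 \<le> T" for T
    using output_energy_le_lyapunov[OF lin sym pos lyap that] unfolding y_def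
    by (simp add: integral_sum sum_mono)
  ultimately show ?thesis
    unfolding h2norm_sq_def g by (intro nn_integral_halfline_le) (auto simp: y_def sum_nonneg)
qed

section \<open>Centering and graph Laplacians\<close>

definition center :: "real^'n::finite \<Rightarrow> real^'n" where
  "center v = v - ((v \<bullet> 1) / real CARD('n)) *\<^sub>R 1"

lemma linear_center: "linear center"
  by (rule linearI) (simp_all add: center_def inner_add_left algebra_simps add_divide_distrib scaleR_add_left)

lemma center_add: "center (u + w) = center u + center w"
  and center_scaleR: "center (c *\<^sub>R u) = c *\<^sub>R center u"
  using linear_add[OF linear_center] linear_scale[OF linear_center] by blast+

lemma inner_center: "u \<bullet> center w = u \<bullet> w - (u \<bullet> 1) * (w \<bullet> 1) / real CARD('n::finite)"
  for u w :: "real^'n"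
  by (simp add: center_def inner_diff_right)

lemma inner_center_commute: "u \<bullet> center w = center u \<bullet> w" for u w :: "real^'n::finite"
proof -
  have "center u \<bullet> w = w \<bullet> u - (w \<bullet> 1) * (u \<bullet> 1) / real CARD('n)"
    by (subst inner_commute[of "center u"]) (rule inner_center)
  then show ?thesis by (simp add: inner_center inner_commute mult.commute)
qed

lemma center_inner_1: "center u \<bullet> 1 = 0" for u :: "real^'n::finite"
proof -
  have "(1::real^'n) \<bullet> 1 = real CARD('n)" by (simp add: inner_vec_def)
  then have "1 \<bullet> center u = 0" by (simp add: inner_center inner_commute[of 1 u])
  then show ?thesis by (simp add: inner_commute)
qed

lemma center_inner_center: "center u \<bullet> center w = u \<bullet> center w"
proof -
  have "center u \<bullet> center w = center u \<bullet> w" by (simp add: inner_center center_inner_1)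
  then show ?thesis by (metis inner_center_commute)
qed

lemma axis_inner_center_axis: "axis j 1 \<bullet> center (axis j 1 :: real^'n::finite) = 1 - 1 / real CARD('n)"
  by (simp add: inner_center inner_axis_axis inner_axis')

lemma center_symmetric_matrix_mult:
  fixes L :: "real^'n::finite^'n"
  assumes "transpose L = L" "L *v 1 = 0"
  shows "center (L *v v) = L *v v"
proof -
  have "(L *v v) \<bullet> 1 = 0"
    using symmetric_matrix_inner[OF assms(1), of 1 v] assms(2) by (simp add: inner_commute)
  then show ?thesis by (simp add: center_def)
qed

lemma laplacian_mult_vector_nth: "(laplacian b *v x) $ i = (\<Sum>j\<in>UNIV. b i j * (x $ i - x $ j))"
proof -
  have "(laplacian b *v x) $ i
      = (\<Sum>j\<in>UNIV. (if i = j then \<Sum>k\<in>UNIV - {i}. b i k else - b i j) * x $ j)"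
    by (simp add: laplacian_def matrix_vector_mult_def)
  also have "\<dots> = (\<Sum>k\<in>UNIV - {i}. b i k) * x $ i + (\<Sum>j\<in>UNIV - {i}. - b i j * x $ j)"
    by (subst sum.remove[of UNIV i]) (auto intro!: sum.cong)
  also have "\<dots> = (\<Sum>j\<in>UNIV - {i}. b i j * (x $ i - x $ j))"
    by (simp add: right_diff_distrib sum_subtractf sum_distrib_right sum_negf)
  also have "\<dots> = (\<Sum>j\<in>UNIV. b i j * (x $ i - x $ j))"
    by (simp add: sum.remove[of UNIV i])
  finally show ?thesis .
qed

lemma laplacian_mult_1: "laplacian b *v 1 = 0"
  by (simp add: vec_eq_iff laplacian_mult_vector_nth)

lemma transpose_laplacian: "(\<And>i j. b i j = b j i) \<Longrightarrow> transpose (laplacian b) = laplacian b"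
  by (simp add: vec_eq_iff transpose_def laplacian_def)

lemma inner_laplacian: "x \<bullet> (laplacian b *v x) = (\<Sum>i\<in>UNIV. \<Sum>j\<in>UNIV. b i j * x $ i * (x $ i - x $ j))"
  by (simp add: inner_vec_def laplacian_mult_vector_nth sum_distrib_left mult_ac)

lemma psd_laplacian:
  assumes sym: "\<And>i j. b i j = b j i" and nonneg: "\<And>i j. i \<noteq> j \<Longrightarrow> 0 \<le> b i j"
  shows "psd_matrix (laplacian b)"
proof -
  have "0 \<le> x \<bullet> (laplacian b *v x)" for x
  proof -
    have "2 * (x \<bullet> (laplacian b *v x))
        = (\<Sum>i\<in>UNIV. \<Sum>j\<in>UNIV. b i j * x $ i * (x $ i - x $ j)) + (\<Sum>i\<in>UNIV. \<Sum>j\<in>UNIV. b i j * x $ j * (x $ j - x $ i))"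
      unfolding inner_laplacian by (subst (2) sum.swap) (simp add: sym)
    also have "\<dots> = (\<Sum>i\<in>UNIV. \<Sum>j\<in>UNIV. b i j * (x $ i - x $ j)\<^sup>2)"
      by (simp add: sum.distrib[symmetric] power2_eq_square algebra_simps)
    also have "\<dots> \<ge> 0"
    proof (intro sum_nonneg)
      show "0 \<le> b i j * (x $ i - x $ j)\<^sup>2" for i j
        using nonneg[of i j] by (cases "i = j") auto
    qed
    finally show ?thesis by simp
  qed
  moreover have "transpose (laplacian b) = laplacian b" by (rule transpose_laplacian) (rule sym)
  ultimately show ?thesis unfolding psd_matrix_def by blast
qed

lemma trace_laplacian: "trace (laplacian b) = (\<Sum>i\<in>UNIV. \<Sum>j\<in>UNIV - {i}. b i j)"
  by (simp add: trace_def laplacian_def)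

section \<open>The droop-controlled network\<close>

lemma sum_UNIV_sum_type:
  "(\<Sum>x\<in>UNIV. g x) = (\<Sum>a\<in>UNIV. g (Inl a)) + (\<Sum>b\<in>UNIV. g (Inr b))"
  for g :: "'a::finite + 'b::finite \<Rightarrow> 'c::comm_monoid_add"
  using sum.Plus[of UNIV UNIV g] by (simp add: o_def)

lemma sum_delta_mult: "(\<Sum>j\<in>UNIV. (if i = j then a else 0) * g j) = a * g i"
  for a :: real and i :: "'a::finite"
  by (subst sum.cong[OF refl, of _ _ "\<lambda>j. if i = j then a * g j else 0"]) auto

lemma axis_inner_mult_axis: "axis j 1 \<bullet> (A *v axis j 1) = A $ j $ j"
  for A :: "real^'n::finite^'n"
  by (simp add: matrix_vector_mult_basis column_def inner_axis')

definition delta_part :: "real^('n::finite + 'n + 'n) \<Rightarrow> real^'n" where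
  "delta_part z = (\<chi> i. z $ Inl i)"

definition omega_part :: "real^('n::finite + 'n + 'n) \<Rightarrow> real^'n" where
  "omega_part z = (\<chi> i. z $ Inr (Inl i))"

definition volt_part :: "real^('n::finite + 'n + 'n) \<Rightarrow> real^'n" where
  "volt_part z = (\<chi> i. z $ Inr (Inr i))"

definition join_state :: "real^'n \<Rightarrow> real^'n \<Rightarrow> real^'n \<Rightarrow> real^('n::finite + 'n + 'n)" where
  "join_state d w v = (\<chi> r. case r of Inl i \<Rightarrow> d $ i | Inr (Inl i) \<Rightarrow> w $ i | Inr (Inr i) \<Rightarrow> v $ i)"

lemma parts_join_state [simp]:
  "delta_part (join_state d w v) = d" "omega_part (join_state d w v) = w"
  "volt_part (join_state d w v) = v"
  by (simp_all add: delta_part_def omega_part_def volt_part_def join_state_def vec_eq_iff)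

lemma linear_parts: "linear delta_part" "linear omega_part" "linear volt_part"
  by (auto intro!: linearI simp: delta_part_def omega_part_def volt_part_def vec_eq_iff)

lemma linear_join_state: "linear (\<lambda>z. join_state (f z) (g z) (h z))"
  if "linear f" "linear g" "linear h"
  using that by (auto intro!: linearI simp: join_state_def vec_eq_iff linear_add linear_scale
      split: sum.splits)

lemma inner_state_parts: "z \<bullet> y = delta_part z \<bullet> delta_part y + omega_part z \<bullet> omega_part y + volt_part z \<bullet> volt_part y"
  by (simp add: inner_vec_def sum_UNIV_sum_type delta_part_def omega_part_def volt_part_def add.assoc)

lemma parts_sysA_mult:
  fixes L :: "real^'n::finite^'n"
  shows "delta_part (sysA kP tauP kQ tauQ cQ L *v z) = omega_part z"
    and "omega_part (sysA kP tauP kQ tauQ cQ L *v z)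
           = - (kP / tauP) *\<^sub>R (L *v delta_part z) - (1 / tauP) *\<^sub>R omega_part z"
    and "volt_part (sysA kP tauP kQ tauQ cQ L *v z)
           = - (cQ / tauQ) *\<^sub>R volt_part z - (kQ / tauQ) *\<^sub>R (L *v volt_part z)"
  by (simp_all add: vec_eq_iff delta_part_def omega_part_def volt_part_def sysA_def
      matrix_vector_mult_def sum_UNIV_sum_type sum_negf left_diff_distrib sum_subtractf
      sum_distrib_left mult.assoc sum_delta_mult)

lemma sysB_mult_axis:
  "sysB tauP tauQ *v axis (Inl j) 1 = join_state 0 ((1 / tauP) *\<^sub>R axis j 1) 0"
  "sysB tauP tauQ *v axis (Inr j) 1 = join_state 0 0 ((1 / tauQ) *\<^sub>R axis j 1)"
  by (simp_all only: matrix_vector_mult_basis)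
    (simp_all add: column_def sysB_def join_state_def vec_eq_iff axis_def split: sum.splits)

lemma norm_sysC_mult_squared:
  fixes S :: "real^'n::finite^'n"
  assumes "0 \<le> alpha"
  shows "(norm (sysC alpha S *v z))\<^sup>2
    = alpha * ((norm (S *v delta_part z))\<^sup>2 + (norm (S *v volt_part z))\<^sup>2)"
proof -
  have "(sysC alpha S *v z) $ Inl i = sqrt alpha * (S *v delta_part z) $ i"
    and "(sysC alpha S *v z) $ Inr i = sqrt alpha * (S *v volt_part z) $ i" for i
    by (simp_all add: sysC_def matrix_vector_mult_def sum_UNIV_sum_type delta_part_def
        volt_part_def sum_distrib_left mult.assoc)
  then show ?thesis
    using assms by (simp add: norm_vec_squared sum_UNIV_sum_type power_mult_distrib sum_distrib_left distrib_left)
qed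

locale droop_certificate =
  fixes kP tauP kQ tauQ cQ alpha mu :: real and L :: "real^'n::finite^'n"
  assumes pos: "0 < kP" "0 < tauP" "0 < kQ" "0 < tauQ" "0 < cQ" "0 < alpha" "0 < mu"
    and psd_L: "psd_matrix L" and L_mult_1: "L *v 1 = 0"
begin

definition "bP = alpha * tauP / (2 * kP)"
definition "bQ = alpha * tauQ / 2"
definition "pQ = kQ * mu\<^sup>2 / (cQ + kQ * mu)\<^sup>2"
definition "qQ = cQ / (cQ + kQ * mu)\<^sup>2"

definition certificate :: "real^('n + 'n + 'n) \<Rightarrow> real^('n + 'n + 'n)" where
  "certificate z = join_state
     (bP *\<^sub>R (kP *\<^sub>R (L *v delta_part z) + (1 / tauP) *\<^sub>R center (delta_part z) + center (omega_part z)))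
     (bP *\<^sub>R (center (delta_part z) + tauP *\<^sub>R center (omega_part z)))
     (bQ *\<^sub>R (pQ *\<^sub>R center (volt_part z) + qQ *\<^sub>R (L *v volt_part z)))"

lemma inner_certificate:
  "u \<bullet> certificate z =
     bP * (kP * (delta_part u \<bullet> (L *v delta_part z)) + (1 / tauP) * (delta_part u \<bullet> center (delta_part z))
       + delta_part u \<bullet> center (omega_part z) + omega_part u \<bullet> center (delta_part z)
       + tauP * (omega_part u \<bullet> center (omega_part z)))
   + bQ * (pQ * (volt_part u \<bullet> center (volt_part z)) + qQ * (volt_part u \<bullet> (L *v volt_part z)))"
  by (simp add: inner_state_parts[of u] certificate_def inner_add_right algebra_simps)

lemma L_symmetric: "u \<bullet> (L *v w) = w \<bullet> (L *v u)"
  using psd_L symmetric_matrix_inner unfolding psd_matrix_def by (metis inner_commute)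

lemma center_L: "center (L *v v) = L *v v"
  using center_symmetric_matrix_mult psd_L L_mult_1 unfolding psd_matrix_def by blast

lemma linear_certificate: "linear certificate"
  unfolding certificate_def
  by (intro linear_join_state linear_compose_add linear_compose_scale_right
      linear_compose[OF _ linear_center, unfolded o_def]
      linear_compose[OF _ matrix_vector_mul_linear, unfolded o_def] linear_parts)

lemma certificate_symmetric: "u \<bullet> certificate w = w \<bullet> certificate u"
  unfolding inner_certificate
  using L_symmetric[of "delta_part u" "delta_part w"] L_symmetric[of "volt_part u" "volt_part w"]
  by (simp add: inner_center inner_commute mult.commute)

text \<open>The \<open>(\<delta>, \<omega>)\<close> block is \<open>kP L \<oplus> 0\<close> plus the Gram form of \<open>\<Pi> (\<delta> / tauP + \<omega>)\<close>.\<close>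
lemma certificate_nonneg: "0 \<le> z \<bullet> certificate z"
proof -
  define d where "d = delta_part z"
  define w where "w = omega_part z"
  define v where "v = volt_part z"
  have "(1 / tauP) * (d \<bullet> center d) + d \<bullet> center w + w \<bullet> center d + tauP * (w \<bullet> center w)
      = tauP * (center (d /\<^sub>R tauP + w) \<bullet> center (d /\<^sub>R tauP + w))"
    using pos
    by (simp add: center_add center_scaleR inner_add_left inner_add_right center_inner_center
        power2_eq_square field_simps)
  then have "0 \<le> (1 / tauP) * (d \<bullet> center d) + d \<bullet> center w + w \<bullet> center d + tauP * (w \<bullet> center w)"
    using pos by simp
  moreover have "0 \<le> kP * (d \<bullet> (L *v d))" using pos psd_L unfolding psd_matrix_def by simp
  ultimately have \<delta>\<omega>_block: "0 \<le> kP * (d \<bullet> (L *v d)) + (1 / tauP) * (d \<bullet> center d)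
      + d \<bullet> center w + w \<bullet> center d + tauP * (w \<bullet> center w)"
    by linarith
  have "0 \<le> v \<bullet> (L *v v)" using psd_L unfolding psd_matrix_def by simp
  moreover have "0 \<le> v \<bullet> center v" by (metis center_inner_center inner_ge_zero)
  ultimately have V_block: "0 \<le> pQ * (v \<bullet> center v) + qQ * (v \<bullet> (L *v v))"
    using pos by (intro add_nonneg_nonneg mult_nonneg_nonneg) (simp_all add: pQ_def qQ_def)
  have "0 \<le> bP" "0 \<le> bQ" using pos by (simp_all add: bP_def bQ_def)
  then show ?thesis
    unfolding inner_certificate d_def[symmetric] w_def[symmetric] v_def[symmetric]
    by (intro add_nonneg_nonneg mult_nonneg_nonneg \<delta>\<omega>_block V_block)
qed

lemma V_block_residual:
  "cQ * pQ * Y1 + (cQ * qQ + kQ * pQ - 1) * Y2 + kQ * qQ * Y3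
     = kQ * cQ / (cQ + kQ * mu)\<^sup>2 * (Y3 - 2 * mu * Y2 + mu\<^sup>2 * Y1)"
proof -
  define D where "D = cQ + kQ * mu"
  have "0 < D" unfolding D_def using pos by (intro add_pos_pos mult_pos_pos)
  then have "D \<noteq> 0" by simp
  then show ?thesis unfolding pQ_def qQ_def D_def[symmetric]
    by (simp add: field_simps) (simp add: D_def power2_eq_square algebra_simps)
qed

lemma certificate_lyapunov:
  assumes S: "\<And>x. (norm (S *v x))\<^sup>2 = x \<bullet> (L *v x)"
  shows "2 * ((sysA kP tauP kQ tauQ cQ L *v z) \<bullet> certificate z) + (norm (sysC alpha S *v z))\<^sup>2 \<le> 0"
proof -
  define d where "d = delta_part z"
  define w where "w = omega_part z"
  define v where "v = volt_part z"
  have Lc: "(L *v x) \<bullet> center y = y \<bullet> (L *v x)" for x y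
    by (metis center_L inner_center_commute inner_commute)
  txt \<open>The \<open>(\<delta>, \<omega>)\<close> block contributes exactly \<open>- \<alpha> \<delta> \<bullet> L \<delta>\<close>.\<close>
  have "2 * ((sysA kP tauP kQ tauQ cQ L *v z) \<bullet> certificate z) + alpha * (d \<bullet> (L *v d) + v \<bullet> (L *v v))
      = - alpha * (cQ * pQ * (v \<bullet> center v) + (cQ * qQ + kQ * pQ - 1) * (v \<bullet> (L *v v))
          + kQ * qQ * ((L *v v) \<bullet> (L *v v)))"
    using pos unfolding inner_certificate parts_sysA_mult d_def[symmetric] w_def[symmetric] v_def[symmetric]
    by (simp add: inner_diff_left Lc bP_def bQ_def field_simps)
  also have "\<dots> = - alpha * (kQ * cQ / (cQ + kQ * mu)\<^sup>2)
      * ((L *v v - mu *\<^sub>R center v) \<bullet> (L *v v - mu *\<^sub>R center v))"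
  proof -
    have "(L *v v - mu *\<^sub>R center v) \<bullet> (L *v v - mu *\<^sub>R center v)
        = (L *v v) \<bullet> (L *v v) - 2 * mu * (v \<bullet> (L *v v)) + mu\<^sup>2 * (v \<bullet> center v)"
      by (simp add: inner_diff_left inner_diff_right Lc center_inner_center inner_commute[of "center v"]
          power2_eq_square algebra_simps)
    then show ?thesis unfolding V_block_residual by simp
  qed
  also have "\<dots> \<le> 0" using pos by (simp add: mult_nonneg_nonneg)
  finally show ?thesis
    using pos norm_sysC_mult_squared[of alpha S z] unfolding S d_def v_def by simp
qed

lemma certificate_sysB_columns:
  "(sysB tauP tauQ *v axis (Inl j) 1) \<bullet> certificate (sysB tauP tauQ *v axis (Inl j) 1)
     = bP * tauP * (1 / tauP)\<^sup>2 * (1 - 1 / real CARD('n))"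
  "(sysB tauP tauQ *v axis (Inr j) 1) \<bullet> certificate (sysB tauP tauQ *v axis (Inr j) 1)
     = bQ * (1 / tauQ)\<^sup>2 * (pQ * (1 - 1 / real CARD('n)) + qQ * L $ j $ j)"
proof -
  have center_0: "center 0 = (0 :: real^'n)" using linear_center by (rule linear_0)
  show "(sysB tauP tauQ *v axis (Inl j) 1) \<bullet> certificate (sysB tauP tauQ *v axis (Inl j) 1)
     = bP * tauP * (1 / tauP)\<^sup>2 * (1 - 1 / real CARD('n))"
    unfolding sysB_mult_axis using pos
    by (simp add: inner_certificate center_scaleR center_0 axis_inner_center_axis power2_eq_square)
  show "(sysB tauP tauQ *v axis (Inr j) 1) \<bullet> certificate (sysB tauP tauQ *v axis (Inr j) 1)
     = bQ * (1 / tauQ)\<^sup>2 * (pQ * (1 - 1 / real CARD('n)) + qQ * L $ j $ j)"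
    unfolding sysB_mult_axis
    by (simp add: inner_certificate center_scaleR center_0 axis_inner_center_axis power2_eq_square
        matrix_vector_mult_scaleR axis_inner_mult_axis algebra_simps)
qed

lemma pQ_plus_qQ_mu: "pQ + qQ * mu = mu / (cQ + kQ * mu)"
proof -
  define D where "D = cQ + kQ * mu"
  have "0 < D" unfolding D_def using pos by (intro add_pos_pos mult_pos_pos)
  then show ?thesis
    unfolding pQ_def qQ_def D_def[symmetric]
    by (simp add: field_simps power2_eq_square) (simp add: D_def algebra_simps)
qed

lemma trace_certificate:
  assumes "trace L = (real CARD('n) - 1) * mu"
  shows "(\<Sum>c\<in>UNIV. (sysB tauP tauQ *v axis c 1) \<bullet> certificate (sysB tauP tauQ *v axis c 1))
    = alpha / 2 * (real CARD('n) - 1) * (1 / kP + 1 / (tauQ * (cQ / mu + kQ)))"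
proof -
  define N where "N = real CARD('n)"
  have "N > 0" by (simp add: N_def)
  have "N * pQ * (1 - 1 / N) + qQ * trace L = (N - 1) * (pQ + qQ * mu)"
    unfolding assms N_def[symmetric] using \<open>N > 0\<close> by (simp add: field_simps)
  moreover have "(\<Sum>c\<in>UNIV. (sysB tauP tauQ *v axis c 1) \<bullet> certificate (sysB tauP tauQ *v axis c 1))
      = N * (bP * tauP * (1 / tauP)\<^sup>2 * (1 - 1 / N))
        + bQ * (1 / tauQ)\<^sup>2 * (N * pQ * (1 - 1 / N) + qQ * trace L)"
    by (simp only: sum_UNIV_sum_type certificate_sysB_columns N_def)
      (simp add: trace_def sum.distrib flip: sum_distrib_left)
  ultimately have "(\<Sum>c\<in>UNIV. (sysB tauP tauQ *v axis c 1) \<bullet> certificate (sysB tauP tauQ *v axis c 1))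
      = N * (bP * tauP * (1 / tauP)\<^sup>2 * (1 - 1 / N))
        + bQ * (1 / tauQ)\<^sup>2 * ((N - 1) * (pQ + qQ * mu))"
    by simp
  also have "\<dots> = alpha / 2 * (N - 1) * (1 / kP + 1 / (tauQ * (cQ / mu + kQ)))"
  proof -
    have P_part: "N * (bP * tauP * (1 / tauP)\<^sup>2 * (1 - 1 / N)) = alpha / 2 * (N - 1) * (1 / kP)"
      using pos \<open>N > 0\<close> unfolding bP_def by (simp add: field_simps power2_eq_square)
    have "0 < cQ + kQ * mu" using pos by (intro add_pos_pos mult_pos_pos)
    then have Q_part: "bQ * (1 / tauQ)\<^sup>2 * ((N - 1) * (pQ + qQ * mu))
        = alpha / 2 * (N - 1) * (1 / (tauQ * (cQ / mu + kQ)))"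
      using pos unfolding pQ_plus_qQ_mu bQ_def by (simp add: field_simps power2_eq_square)
    show ?thesis
      using P_part Q_part distrib_left[of "alpha / 2 * (N - 1)" "1 / kP" "1 / (tauQ * (cQ / mu + kQ))"]
      by linarith
  qed
  finally show ?thesis unfolding N_def .
qed

lemma h2norm_sq_le:
  assumes "trace L = (real CARD('n) - 1) * mu"
  shows "h2norm_sq (sysA kP tauP kQ tauQ cQ L) (sysB tauP tauQ) (sysC alpha (psd_sqrt L))
    \<le> ennreal (alpha / 2 * (real CARD('n) - 1) * (1 / kP + 1 / (tauQ * (cQ / mu + kQ))))"
  using h2norm_sq_le_lyapunov[where B = "sysB tauP tauQ", OF linear_certificate certificate_symmetric
      certificate_nonneg certificate_lyapunov[OF norm_psd_sqrt_mult_squared[OF psd_L]]]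
  unfolding trace_certificate[OF assms] .

end

section \<open>Line graphs\<close>

context
  fixes b :: "'n::finite \<Rightarrow> 'n \<Rightarrow> real" and p :: "nat \<Rightarrow> 'n"
  assumes p_bij: "bij_betw p {1..CARD('n)} UNIV"
    and b_sym: "\<And>x y. b x y = b y x"
    and b_edge: "\<And>i. 1 \<le> i \<Longrightarrow> i < CARD('n) \<Longrightarrow> b (p i) (p (i + 1)) > 0"
    and b_nonedge: "\<And>i k. i \<in> {1..CARD('n)} \<Longrightarrow> k \<in> {1..CARD('n)} \<Longrightarrow>
                       k \<noteq> i + 1 \<Longrightarrow> i \<noteq> k + 1 \<Longrightarrow> b (p i) (p k) = 0"
begin

lemma path_vertex: obtains i where "i \<in> {1..CARD('n)}" "p i = x"
  using p_bij unfolding bij_betw_def by (metis UNIV_I imageE)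

lemma path_weight_nonneg: "0 \<le> b x y"
proof -
  obtain i k where i: "i \<in> {1..CARD('n)}" "p i = x" and k: "k \<in> {1..CARD('n)}" "p k = y"
    by (metis path_vertex)
  consider "k = i + 1" | "i = k + 1" | "k \<noteq> i + 1" "i \<noteq> k + 1" by blast
  then show ?thesis
  proof cases
    case 1
    then show ?thesis using b_edge[of i] i k by force
  next
    case 2
    then show ?thesis using b_edge[of k] b_sym[of x y] i k by force
  next
    case 3
    then show ?thesis using b_nonedge[of i k] i k by simp
  qed
qed

lemma path_sum_weights: "(\<Sum>x\<in>UNIV. \<Sum>y\<in>UNIV. b x y) = 2 * (\<Sum>i = 1..<CARD('n). b (p i) (p (i + 1)))"
proof -
  define N where "N = CARD('n)"
  define e where "e i = b (p i) (p (i + 1))" for i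
  have reindex: "(\<Sum>x\<in>UNIV. g x) = (\<Sum>i\<in>{1..N}. g (p i))" for g :: "'n \<Rightarrow> real"
    unfolding N_def by (rule sum.reindex_bij_betw[OF p_bij, symmetric])
  have forward: "(\<Sum>i\<in>{1..N}. \<Sum>k\<in>{1..N}. if k = i + 1 then b (p i) (p k) else 0) = (\<Sum>i = 1..<N. e i)"
  proof -
    have "(\<Sum>i\<in>{1..N}. \<Sum>k\<in>{1..N}. if k = i + 1 then b (p i) (p k) else 0)
        = (\<Sum>i\<in>{1..N}. if i < N then e i else 0)"
      by (intro sum.cong refl) (auto simp: e_def)
    also have "\<dots> = sum e {i \<in> {1..N}. i < N}" by (simp only: sum.inter_filter[OF finite_atLeastAtMost])
    also have "{i \<in> {1..N}. i < N} = {1..<N}" by auto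
    finally show ?thesis .
  qed
  have backward: "(\<Sum>i\<in>{1..N}. \<Sum>k\<in>{1..N}. if i = k + 1 then b (p i) (p k) else 0) = (\<Sum>i = 1..<N. e i)"
  proof -
    have "(\<Sum>i\<in>{1..N}. \<Sum>k\<in>{1..N}. if i = k + 1 then b (p i) (p k) else 0)
        = (\<Sum>k\<in>{1..N}. \<Sum>i\<in>{1..N}. if i = k + 1 then b (p k) (p i) else 0)"
      by (subst sum.swap) (simp only: b_sym)
    then show ?thesis unfolding forward .
  qed
  have "(\<Sum>x\<in>UNIV. \<Sum>y\<in>UNIV. b x y) = (\<Sum>i\<in>{1..N}. \<Sum>k\<in>{1..N}. b (p i) (p k))"
    by (simp add: reindex)
  also have "\<dots> = (\<Sum>i\<in>{1..N}. \<Sum>k\<in>{1..N}. (if k = i + 1 then b (p i) (p k) else 0)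
                                        + (if i = k + 1 then b (p i) (p k) else 0))"
    using b_nonedge unfolding N_def by (intro sum.cong) auto
  also have "\<dots> = 2 * (\<Sum>i = 1..<N. e i)"
    by (simp only: sum.distrib forward backward mult_2)
  finally show ?thesis unfolding N_def e_def .
qed

lemma path_trace_laplacian: "trace (laplacian b) = 2 * (\<Sum>i = 1..<CARD('n). b (p i) (p (i + 1)))"
proof -
  have "b x x = 0" for x
    using b_nonedge by (metis path_vertex n_not_Suc_n Suc_eq_plus1)
  then have "(\<Sum>j\<in>UNIV - {i}. b i j) = (\<Sum>j\<in>UNIV. b i j)" for i
    by (simp add: sum.remove[of UNIV i])
  then show ?thesis by (simp add: trace_laplacian path_sum_weights)
qed

end

theorem theorem4:
  fixes b :: "'n::finite \<Rightarrow> 'n \<Rightarrow> real"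
    and p :: "nat \<Rightarrow> 'n"
    and kP tauP kQ tauQ bbar alpha :: real
  assumes N2: "CARD('n) \<ge> 2"
    and p_bij: "bij_betw p {1..CARD('n)} UNIV"
    and b_sym: "\<And>x y. b x y = b y x"
    and b_edge: "\<And>i. 1 \<le> i \<Longrightarrow> i < CARD('n) \<Longrightarrow> b (p i) (p (i + 1)) > 0"
    and b_nonedge: "\<And>i k. i \<in> {1..CARD('n)} \<Longrightarrow> k \<in> {1..CARD('n)} \<Longrightarrow>
                       k \<noteq> i + 1 \<Longrightarrow> i \<noteq> k + 1 \<Longrightarrow> b (p i) (p k) = 0"
    and pos: "kP > 0" "tauP > 0" "kQ > 0" "tauQ > 0" "alpha > 0"
    and bbar: "bbar \<ge> 0"
  shows "h2norm_sq
           (sysA kP tauP kQ tauQ (1 + 2 * kQ * bbar) (laplacian b))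
           (sysB tauP tauQ)
           (sysC alpha (psd_sqrt (laplacian b)))
         \<le> ennreal (alpha / 2 * (real CARD('n) - 1) *
              (1 / kP + 1 / (tauQ * ((1 + 2 * kQ * bbar) /
                 (2 * ((\<Sum>i = 1..<CARD('n). b (p i) (p (i + 1))) / (real CARD('n) - 1))) + kQ))))"
proof -
  define E where "E = (\<Sum>i = 1..<CARD('n). b (p i) (p (i + 1)))"
  define mu where "mu = 2 * (E / (real CARD('n) - 1))"
  have "0 < E" unfolding E_def using b_edge N2 by (intro sum_pos) auto
  then have "0 < mu" using N2 by (simp add: mu_def)
  have "psd_matrix (laplacian b)"
    using path_weight_nonneg[OF p_bij b_sym b_edge b_nonedge] by (intro psd_laplacian b_sym)
  moreover have "0 < 1 + 2 * kQ * bbar" using pos bbar by (simp add: add_pos_nonneg)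
  ultimately interpret droop_certificate kP tauP kQ tauQ "1 + 2 * kQ * bbar" alpha mu "laplacian b"
    using pos \<open>0 < mu\<close> laplacian_mult_1 by unfold_locales auto
  have "trace (laplacian b) = (real CARD('n) - 1) * mu"
    using path_trace_laplacian[OF p_bij b_sym b_edge b_nonedge] N2 by (simp add: mu_def E_def)
  from h2norm_sq_le[OF this] show ?thesis unfolding mu_def E_def .
qed

end
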